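(* Let $X$ be an infinite-dimensional complex Banach space and let $\phi:\mathcal{B}(X)\to\mathcal{B}(X)$ be a surjective map such that $K(\phi(T)\phi(S)+\phi(S)\phi(T))=K(TS+ST)$ for all $T,S\in\mathcal{B}(X)$. Then for every $R\in\mathcal{B}(X)$, $\phi(R)=0$ if and only if $R=0$.
   Context: $\mathcal{B}(X)$ denotes the algebra of all bounded linear operators on $X$. For $T\in\mathcal{B}(X)$, the analytic core $K(T)$ is the set of all $x\in X$ for which there exist $\delta>0$ and a sequence $(x_n)_{n\ge 0}\subset X$ with $x_0=x$, $Tx_{n+1}=x_n$ and $\|x_n\|\le \delta^n\|x\|$ for all $n\ge 0$. *)

theory Defs
  imports "HOL-Analysis.Analysis"
begin

text \<open>Complex Banach spaces: a real Banach space together with a compatible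
  complex scalar multiplication (the distribution has no complex vector space class).\<close>
class complex_banach = banach +
  fixes scaleC :: "complex \<Rightarrow> 'a \<Rightarrow> 'a"
  assumes scaleC_of_real: "scaleC (complex_of_real r) x = scaleR r x"
    and scaleC_add_right: "scaleC a (x + y) = scaleC a x + scaleC a y"
    and scaleC_add_left: "scaleC (a + b) x = scaleC a x + scaleC b x"
    and scaleC_scaleC: "scaleC a (scaleC b x) = scaleC (a * b) x"
    and scaleC_one: "scaleC 1 x = x"
    and norm_scaleC: "norm (scaleC a x) = cmod a * norm x"

definition complex_span :: "'a::complex_banach set \<Rightarrow> 'a set" where
  "complex_span S = {(\<Sum>v\<in>F. scaleC (c v) v) | F c. finite F \<and> F \<subseteq> S}"

definition infinite_dimensional :: "'a::complex_banach itself \<Rightarrow> bool" where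
  "infinite_dimensional TYPE('a) \<longleftrightarrow> (\<forall>F::'a set. finite F \<longrightarrow> complex_span F \<noteq> UNIV)"

definition bounded_operators :: "('a::complex_banach \<Rightarrow> 'a) set" where
  "bounded_operators = {T. (\<forall>x y. T (x + y) = T x + T y)
                          \<and> (\<forall>c x. T (scaleC c x) = scaleC c (T x))
                          \<and> (\<exists>M. \<forall>x. norm (T x) \<le> M * norm x)}"

definition analytic_core :: "('a::complex_banach \<Rightarrow> 'a) \<Rightarrow> 'a set" where
  "analytic_core T = {x. \<exists>\<delta>>0. \<exists>xs::nat \<Rightarrow> 'a. xs 0 = x
        \<and> (\<forall>n. T (xs (Suc n)) = xs n)
        \<and> (\<forall>n. norm (xs n) \<le> \<delta> ^ n * norm x)}"

end

theory Submission
  imports Defs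
begin

text \<open>If \<open>R \<noteq> 0\<close>, then some bounded \<open>S\<close> makes \<open>RS + SR\<close> have an eigenvector with
  nonzero eigenvalue, and such a vector lies in the analytic core: take \<open>S = I\<close> when some
  \<open>x\<close> with \<open>Rx \<noteq> 0\<close> is an eigenvector of \<open>R\<close>, and otherwise the rank-one operator
  \<open>S z = g(z) x\<close>, with \<open>g\<close> a Hahn-Banach functional not vanishing on \<open>Rx\<close>; then \<open>RS + SR\<close>
  leaves the plane spanned by \<open>x\<close> and \<open>Rx\<close> invariant and acts there by the matrix
  \<open>[[g(Rx), g(R\<^sup>2x)], [g(x), g(Rx)]]\<close>, whose eigenvalues \<open>g(Rx) \<plusminus> \<surd>(g(x) g(R\<^sup>2x))\<close> are not
  both zero. Hence an operator is zero iff all the cores \<open>K(RS + SR)\<close> are trivial, a property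
  the hypothesis transports between \<open>R\<close> and \<open>\<phi>(R)\<close> once \<open>S\<close> ranges over the image of \<open>\<phi>\<close>.\<close>

text \<open>\<open>G\<close> is the graph of a real-linear functional on a subspace, dominated by the norm and
  taking the value \<open>\<parallel>x\<^sub>0\<parallel>\<close> at \<open>x\<^sub>0\<close>; working with graphs lets Zorn's lemma act on \<open>\<subseteq>\<close>.\<close>
definition dominated_graph :: "'a::real_normed_vector \<Rightarrow> ('a \<times> real) set \<Rightarrow> bool" where
  "dominated_graph x0 G \<longleftrightarrow> (x0, norm x0) \<in> G
     \<and> (\<forall>x a y b. (x, a) \<in> G \<longrightarrow> (y, b) \<in> G \<longrightarrow> (x + y, a + b) \<in> G)
     \<and> (\<forall>x a r. (x, a) \<in> G \<longrightarrow> (r *\<^sub>R x, r * a) \<in> G)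
     \<and> (\<forall>x a. (x, a) \<in> G \<longrightarrow> a \<le> norm x)"

lemma dominated_graphD:
  assumes "dominated_graph x0 G"
  shows "(x0, norm x0) \<in> G"
    and "(x, a) \<in> G \<Longrightarrow> (y, b) \<in> G \<Longrightarrow> (x + y, a + b) \<in> G"
    and "(x, a) \<in> G \<Longrightarrow> (r *\<^sub>R x, r * a) \<in> G"
    and "(x, a) \<in> G \<Longrightarrow> a \<le> norm x"
  using assms unfolding dominated_graph_def by blast+

lemma dominated_graph_zero:
  assumes "dominated_graph x0 G"
  shows "(0, 0) \<in> G"
  using dominated_graphD(3)[OF assms dominated_graphD(1)[OF assms], of 0] by simp

lemma dominated_graph_single_valued:
  assumes G: "dominated_graph x0 G" and "(x, a) \<in> G" "(x, b) \<in> G"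
  shows "a = b"
proof -
  have "a - b \<le> 0" if "(x, a) \<in> G" "(x, b) \<in> G" for a b
  proof -
    have "(x + (-1) *\<^sub>R x, a + (-1) * b) \<in> G"
      using that by (intro dominated_graphD(2,3)[OF G])
    then show ?thesis using dominated_graphD(4)[OF G] by fastforce
  qed
  from this[OF assms(2,3)] this[OF assms(3,2)] show ?thesis by linarith
qed

text \<open>The classical one-dimensional extension step: \<open>c\<close> is squeezed between
  \<open>sup (a - \<parallel>u - y\<parallel>)\<close> and \<open>inf (\<parallel>w + y\<parallel> - b)\<close> over the graph.\<close>
lemma dominated_graph_extension_value:
  assumes G: "dominated_graph x0 G"
  obtains c where "\<And>x a t. (x, a) \<in> G \<Longrightarrow> a + t * c \<le> norm (x + t *\<^sub>R y)"
proof -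
  have sep: "a - norm (u - y) \<le> norm (w + y) - b" if "(u, a) \<in> G" "(w, b) \<in> G" for u a w b
  proof -
    have "a + b \<le> norm ((u - y) + (w + y))"
      using dominated_graphD(4)[OF G dominated_graphD(2)[OF G that]] by simp
    also have "\<dots> \<le> norm (u - y) + norm (w + y)" by (rule norm_triangle_ineq)
    finally show ?thesis by simp
  qed
  define L where "L = {a - norm (u - y) | u a. (u, a) \<in> G}"
  define c where "c = Sup L"
  have "L \<noteq> {}" using dominated_graph_zero[OF G] unfolding L_def by blast
  moreover have "bdd_above L"
    unfolding L_def bdd_above_def using sep[OF _ dominated_graph_zero[OF G]] by fastforce
  ultimately have lower: "a - norm (u - y) \<le> c" and upper: "c \<le> norm (w + y) - b"
    if "(u, a) \<in> G" "(w, b) \<in> G" for u a w b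
    using that sep unfolding c_def L_def by (blast intro: cSup_upper cSup_least)+
  have "a + t * c \<le> norm (x + t *\<^sub>R y)" if xa: "(x, a) \<in> G" for x a t
  proof (cases t "0::real" rule: linorder_cases)
    case less
    have "(1 / -t) * a - norm ((1 / -t) *\<^sub>R x - y) \<le> c"
      using lower[OF dominated_graphD(3)[OF G xa] dominated_graph_zero[OF G]] .
    then have "-t * ((1 / -t) * a - norm ((1 / -t) *\<^sub>R x - y)) \<le> -t * c"
      using less by (intro mult_left_mono) auto
    moreover have "x + t *\<^sub>R y = (-t) *\<^sub>R ((1 / -t) *\<^sub>R x - y)"
      using less by (simp add: scaleR_diff_right)
    then have "norm (x + t *\<^sub>R y) = -t * norm ((1 / -t) *\<^sub>R x - y)"
      using less by simp
    ultimately show ?thesis using less by (simp add: right_diff_distrib)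
  next
    case equal
    then show ?thesis using dominated_graphD(4)[OF G xa] by simp
  next
    case greater
    have "c \<le> norm ((1 / t) *\<^sub>R x + y) - (1 / t) * a"
      using upper[OF dominated_graph_zero[OF G] dominated_graphD(3)[OF G xa]] .
    then have "t * c \<le> t * (norm ((1 / t) *\<^sub>R x + y) - (1 / t) * a)"
      using greater by (intro mult_left_mono) auto
    moreover have "x + t *\<^sub>R y = t *\<^sub>R ((1 / t) *\<^sub>R x + y)"
      using greater by (simp add: scaleR_add_right)
    then have "norm (x + t *\<^sub>R y) = t * norm ((1 / t) *\<^sub>R x + y)"
      using greater by simp
    ultimately show ?thesis using greater by (simp add: right_diff_distrib)
  qed
  then show ?thesis by (rule that)
qed

lemma dominated_graph_extend:
  assumes G: "dominated_graph x0 G" and y: "\<nexists>a. (y, a) \<in> G"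
  shows "\<exists>G'. dominated_graph x0 G' \<and> G \<subset> G'"
proof -
  obtain c where c: "\<And>x a t. (x, a) \<in> G \<Longrightarrow> a + t * c \<le> norm (x + t *\<^sub>R y)"
    using dominated_graph_extension_value[OF G] by blast
  define G' where "G' = {(x + t *\<^sub>R y, a + t * c) | x a t. (x, a) \<in> G}"
  have G'I: "(x + t *\<^sub>R y, a + t * c) \<in> G'" if "(x, a) \<in> G" for x a t
    unfolding G'_def using that by blast
  have "(x, a) \<in> G'" if "(x, a) \<in> G" for x a
    using G'I[OF that, of 0] by simp
  then have sub: "G \<subseteq> G'" by auto
  have "(y, c) \<in> G'" using G'I[OF dominated_graph_zero[OF G], of 1] by simp
  with y have "G' \<noteq> G" by auto
  moreover have "dominated_graph x0 G'"
    unfolding dominated_graph_def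
  proof (intro conjI allI impI)
    show "(x0, norm x0) \<in> G'" using sub dominated_graphD(1)[OF G] by blast
  next
    fix x a z b assume "(x, a) \<in> G'" "(z, b) \<in> G'"
    then obtain x1 a1 t1 x2 a2 t2 where "x = x1 + t1 *\<^sub>R y" "a = a1 + t1 * c" "(x1, a1) \<in> G"
      "z = x2 + t2 *\<^sub>R y" "b = a2 + t2 * c" "(x2, a2) \<in> G" unfolding G'_def by blast
    then show "(x + z, a + b) \<in> G'"
      using G'I[OF dominated_graphD(2)[OF G], of x1 a1 x2 a2 "t1 + t2"]
      by (simp add: algebra_simps)
  next
    fix x a r assume "(x, a) \<in> G'"
    then obtain x1 a1 t where "x = x1 + t *\<^sub>R y" "a = a1 + t * c" "(x1, a1) \<in> G"
      unfolding G'_def by blast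
    then show "(r *\<^sub>R x, r * a) \<in> G'"
      using G'I[OF dominated_graphD(3)[OF G], of x1 a1 r "r * t"]
      by (simp add: algebra_simps)
  next
    fix x a assume "(x, a) \<in> G'"
    then obtain x1 a1 t where "x = x1 + t *\<^sub>R y" "a = a1 + t * c" "(x1, a1) \<in> G"
      unfolding G'_def by blast
    then show "a \<le> norm x" using c by simp
  qed
  ultimately show ?thesis using sub by blast
qed

lemma dominated_graph_span: "dominated_graph x0 {(r *\<^sub>R x0, r * norm x0) | r. True}"
  unfolding dominated_graph_def
proof (intro conjI allI impI)
  show "(x0, norm x0) \<in> {(r *\<^sub>R x0, r * norm x0) | r. True}"
    by (auto intro!: exI[of _ 1])
next
  fix x a y b assume "(x, a) \<in> {(r *\<^sub>R x0, r * norm x0) | r. True}"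
    "(y, b) \<in> {(r *\<^sub>R x0, r * norm x0) | r. True}"
  then obtain r s where "x = r *\<^sub>R x0" "a = r * norm x0" "y = s *\<^sub>R x0" "b = s * norm x0"
    by blast
  then show "(x + y, a + b) \<in> {(r *\<^sub>R x0, r * norm x0) | r. True}"
    by (auto simp: algebra_simps intro!: exI[of _ "r + s"])
next
  fix x a s assume "(x, a) \<in> {(r *\<^sub>R x0, r * norm x0) | r. True}"
  then obtain r where "x = r *\<^sub>R x0" "a = r * norm x0" by blast
  then show "(s *\<^sub>R x, s * a) \<in> {(r *\<^sub>R x0, r * norm x0) | r. True}"
    by (auto intro!: exI[of _ "s * r"])
next
  fix x a assume "(x, a) \<in> {(r *\<^sub>R x0, r * norm x0) | r. True}"
  then obtain r where "x = r *\<^sub>R x0" "a = r * norm x0" by blast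
  then show "a \<le> norm x" by (simp add: mult_right_mono)
qed

lemma dominated_graph_Union_chain:
  assumes "C \<noteq> {}" "chain\<^sub>\<subseteq> C" and graphs: "\<And>G. G \<in> C \<Longrightarrow> dominated_graph x0 G"
  shows "dominated_graph x0 (\<Union>C)"
  unfolding dominated_graph_def
proof (intro conjI allI impI)
  obtain G where "G \<in> C" using assms(1) by blast
  then show "(x0, norm x0) \<in> \<Union>C" using dominated_graphD(1)[OF graphs] by blast
next
  fix x a y b assume "(x, a) \<in> \<Union>C" "(y, b) \<in> \<Union>C"
  then obtain G where G: "G \<in> C" "(x, a) \<in> G" "(y, b) \<in> G"
    using assms(2) unfolding chain_subset_def by blast
  then show "(x + y, a + b) \<in> \<Union>C" using dominated_graphD(2)[OF graphs] by blast
next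
  fix x a r assume "(x, a) \<in> \<Union>C"
  then obtain G where "G \<in> C" "(x, a) \<in> G" by blast
  then show "(r *\<^sub>R x, r * a) \<in> \<Union>C" using dominated_graphD(3)[OF graphs] by blast
next
  fix x a assume "(x, a) \<in> \<Union>C"
  then obtain G where "G \<in> C" "(x, a) \<in> G" by blast
  then show "a \<le> norm x" using dominated_graphD(4)[OF graphs] by blast
qed

lemma real_hahn_banach_norming:
  fixes x0 :: "'a::real_normed_vector"
  obtains f :: "'a \<Rightarrow> real" where "\<And>x y. f (x + y) = f x + f y" "\<And>r x. f (r *\<^sub>R x) = r * f x"
    "\<And>x. f x \<le> norm x" "f x0 = norm x0"
proof -
  define A where "A = {G. dominated_graph x0 G}"
  have "\<forall>C\<in>chains A. \<exists>U\<in>A. \<forall>X\<in>C. X \<subseteq> U"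
  proof
    fix C assume "C \<in> chains A"
    then have "C \<subseteq> A" "chain\<^sub>\<subseteq> C" unfolding chains_def by auto
    show "\<exists>U\<in>A. \<forall>X\<in>C. X \<subseteq> U"
    proof (cases "C = {}")
      case True
      then show ?thesis using dominated_graph_span[of x0] unfolding A_def by blast
    next
      case False
      with \<open>C \<subseteq> A\<close> \<open>chain\<^sub>\<subseteq> C\<close> show ?thesis
        using dominated_graph_Union_chain[of C x0] unfolding A_def by blast
    qed
  qed
  from Zorn_Lemma2[OF this] obtain G where G: "dominated_graph x0 G"
    and maximal: "\<And>G'. dominated_graph x0 G' \<Longrightarrow> G \<subseteq> G' \<Longrightarrow> G' = G"
    unfolding A_def by blast
  have total: "\<exists>a. (y, a) \<in> G" for y
  proof (rule ccontr)
    assume "\<nexists>a. (y, a) \<in> G"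
    then obtain G' where "dominated_graph x0 G'" "G \<subset> G'"
      using dominated_graph_extend[OF G] by blast
    then show False using maximal[of G'] by blast
  qed
  define f where "f y = (SOME a. (y, a) \<in> G)" for y
  have graph: "(y, f y) \<in> G" for y unfolding f_def using total by (rule someI_ex)
  have f_eq: "f y = a" if "(y, a) \<in> G" for y a
    using dominated_graph_single_valued[OF G graph that] .
  show ?thesis
  proof
    show "f (x + y) = f x + f y" for x y by (rule f_eq, rule dominated_graphD(2)[OF G graph graph])
    show "f (r *\<^sub>R x) = r * f x" for r x by (rule f_eq, rule dominated_graphD(3)[OF G graph])
    show "f x \<le> norm x" for x by (rule dominated_graphD(4)[OF G graph])
    show "f x0 = norm x0" by (rule f_eq, rule dominated_graphD(1)[OF G])
  qed
qed

lemma scaleC_zero_left [simp]: "scaleC 0 (x::'a::complex_banach) = 0"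
  using scaleC_of_real[of 0 x] by simp

lemma scaleC_zero_right [simp]: "scaleC c (0::'a::complex_banach) = 0"
  using scaleC_add_right[of c "0::'a" 0] by simp

lemma scaleC_minus_left: "scaleC (- c) (x::'a::complex_banach) = - scaleC c x"
  using scaleC_add_left[of c "- c" x] by (simp add: eq_neg_iff_add_eq_0 add.commute)

lemma scaleC_Re_Im: "scaleC c (x::'a::complex_banach) = Re c *\<^sub>R x + Im c *\<^sub>R scaleC \<i> x"
proof -
  have "c = complex_of_real (Re c) + complex_of_real (Im c) * \<i>"
    by (simp add: complex_eq_iff)
  then have "scaleC c x = scaleC (complex_of_real (Re c)) x + scaleC (complex_of_real (Im c)) (scaleC \<i> x)"
    by (metis scaleC_add_left scaleC_scaleC)
  then show ?thesis by (simp add: scaleC_of_real)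
qed

text \<open>The complexification \<open>g x = f x - i f (i x)\<close> of a real functional; the constant \<open>2\<close>
  (instead of the optimal \<open>1\<close>) avoids the rotation argument.\<close>
lemma complex_hahn_banach_nonzero:
  fixes x0 :: "'a::complex_banach"
  assumes "x0 \<noteq> 0"
  obtains g :: "'a \<Rightarrow> complex" where "\<And>x y. g (x + y) = g x + g y"
    "\<And>c x. g (scaleC c x) = c * g x" "\<And>x. cmod (g x) \<le> 2 * norm x" "g x0 \<noteq> 0"
proof -
  obtain f :: "'a \<Rightarrow> real" where f_add: "\<And>x y. f (x + y) = f x + f y"
    and f_scaleR: "\<And>r x. f (r *\<^sub>R x) = r * f x" and f_le: "\<And>x. f x \<le> norm x"
    and f_x0: "f x0 = norm x0"
    using real_hahn_banach_norming[of x0] by blast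
  have f_abs: "\<bar>f x\<bar> \<le> norm x" for x
    using f_le[of x] f_le[of "(-1) *\<^sub>R x"] f_scaleR[of "-1" x] by simp
  have f_scaleC: "f (scaleC c x) = Re c * f x + Im c * f (scaleC \<i> x)" for c x
    by (subst scaleC_Re_Im) (simp add: f_add f_scaleR)
  define g where "g x = Complex (f x) (- f (scaleC \<i> x))" for x
  show ?thesis
  proof
    show "g (x + y) = g x + g y" for x y
      unfolding g_def by (simp add: scaleC_add_right f_add complex_eq_iff)
  next
    fix c x
    have "f (scaleC \<i> (scaleC c x)) = - Im c * f x + Re c * f (scaleC \<i> x)"
      using f_scaleC[of "\<i> * c" x] by (simp add: scaleC_scaleC)
    with f_scaleC[of c x] show "g (scaleC c x) = c * g x"
      unfolding g_def by (simp add: complex_eq_iff algebra_simps)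
  next
    fix x
    have "cmod (g x) \<le> \<bar>f x\<bar> + \<bar>f (scaleC \<i> x)\<bar>"
      using cmod_le[of "g x"] unfolding g_def by simp
    also have "\<dots> \<le> norm x + norm (scaleC \<i> x)" using f_abs by (simp add: add_mono)
    finally show "cmod (g x) \<le> 2 * norm x" by (simp add: norm_scaleC)
  next
    show "g x0 \<noteq> 0" unfolding g_def using f_x0 assms by (simp add: complex_eq_iff)
  qed
qed

lemma bounded_operators_add: "T \<in> bounded_operators \<Longrightarrow> T (x + y) = T x + T y"
  unfolding bounded_operators_def by blast

lemma bounded_operators_scaleC: "T \<in> bounded_operators \<Longrightarrow> T (scaleC c x) = scaleC c (T x)"
  unfolding bounded_operators_def by blast

lemma bounded_operators_zero: "T \<in> bounded_operators \<Longrightarrow> T 0 = 0"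
  using bounded_operators_scaleC[of T 0 0] by simp

lemma id_in_bounded_operators: "(\<lambda>x. x) \<in> bounded_operators"
  unfolding bounded_operators_def by (auto intro: exI[of _ 1])

lemma rank_one_in_bounded_operators:
  fixes g :: "'a::complex_banach \<Rightarrow> complex"
  assumes "\<And>x y. g (x + y) = g x + g y" "\<And>c x. g (scaleC c x) = c * g x"
    and "\<And>x. cmod (g x) \<le> M * norm x"
  shows "(\<lambda>z. scaleC (g z) v) \<in> bounded_operators"
  unfolding bounded_operators_def
proof (intro CollectI conjI allI exI[of _ "M * norm v"])
  show "scaleC (g (x + y)) v = scaleC (g x) v + scaleC (g y) v" for x y
    unfolding assms(1) by (rule scaleC_add_left)
  show "scaleC (g (scaleC c x)) v = scaleC c (scaleC (g x) v)" for c x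
    unfolding assms(2) by (simp add: scaleC_scaleC)
  show "norm (scaleC (g x) v) \<le> M * norm v * norm x" for x
    using mult_right_mono[OF assms(3), of "norm v" x] by (simp add: norm_scaleC mult_ac)
qed

lemma analytic_core_zero_operator: "analytic_core (\<lambda>x. 0 :: 'a::complex_banach) = {0}"
  unfolding analytic_core_def by (auto intro!: exI[of _ 1] exI[of _ "\<lambda>n. 0"])

lemma eigenvector_in_analytic_core:
  assumes lin: "\<And>c z. T (scaleC c z) = scaleC c (T z)"
    and eigen: "T y = scaleC l y" and "l \<noteq> 0"
  shows "y \<in> analytic_core T"
proof -
  define xs where "xs n = scaleC (inverse l ^ n) y" for n
  have "T (xs (Suc n)) = xs n" for n
  proof -
    have "T (xs (Suc n)) = scaleC (inverse l ^ Suc n * l) y"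
      unfolding xs_def lin eigen scaleC_scaleC ..
    also have "inverse l ^ Suc n * l = inverse l ^ n" using \<open>l \<noteq> 0\<close> by simp
    finally show ?thesis unfolding xs_def .
  qed
  moreover have "norm (xs n) \<le> inverse (cmod l) ^ n * norm y" for n
    unfolding xs_def by (simp add: norm_scaleC norm_power norm_inverse)
  moreover have "xs 0 = y" "inverse (cmod l) > 0"
    using \<open>l \<noteq> 0\<close> unfolding xs_def by (simp_all add: scaleC_one)
  ultimately show ?thesis unfolding analytic_core_def by blast
qed

text \<open>The matrix \<open>[[b, c], [a, b]]\<close> has eigenvalues \<open>b \<plusminus> s\<close> with \<open>s\<^sup>2 = ac\<close>.\<close>
lemma constant_diagonal_2x2_nonzero_eigenvalue:
  fixes a b c :: complex
  assumes "b \<noteq> 0"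
  obtains l \<alpha> \<beta> where "l \<noteq> 0" "\<alpha> \<noteq> 0 \<or> \<beta> \<noteq> 0"
    "b * \<alpha> + c * \<beta> = l * \<alpha>" "a * \<alpha> + b * \<beta> = l * \<beta>"
proof -
  define s where "s = (if b + csqrt (a * c) \<noteq> 0 then csqrt (a * c) else - csqrt (a * c))"
  have ss: "s * s = a * c"
    unfolding s_def using power2_csqrt[of "a * c"] by (simp add: power2_eq_square)
  have "b + s \<noteq> 0" unfolding s_def using assms by (auto simp: algebra_simps)
  show ?thesis
  proof (cases "c = 0 \<and> s = 0")
    case True
    then show ?thesis using that[of "b + s" 0 1] \<open>b + s \<noteq> 0\<close> by simp
  next
    case False
    then show ?thesis using that[of "b + s" c s] \<open>b + s \<noteq> 0\<close> ss
      by (auto simp: algebra_simps)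
  qed
qed

lemma rank_one_anticommutator_eigenvector:
  fixes R :: "'a::complex_banach \<Rightarrow> 'a"
  assumes R: "R \<in> bounded_operators" and not_eigen: "\<And>\<mu>. R x \<noteq> scaleC \<mu> x"
  obtains S y l where "S \<in> bounded_operators" "y \<noteq> 0" "l \<noteq> 0"
    "R (S y) + S (R y) = scaleC l y"
proof -
  have "R x \<noteq> 0" using not_eigen[of 0] by simp
  then obtain g where g_add: "\<And>x y. g (x + y) = g x + g y"
    and g_scaleC: "\<And>c x. g (scaleC c x) = c * g x" and g_bound: "\<And>x. cmod (g x) \<le> 2 * norm x"
    and g_Rx: "g (R x) \<noteq> 0"
    using complex_hahn_banach_nonzero[of "R x"] by blast
  define S where "S z = scaleC (g z) x" for z
  have S: "S \<in> bounded_operators"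
    unfolding S_def using g_add g_scaleC g_bound by (rule rank_one_in_bounded_operators)
  obtain l \<alpha> \<beta> where "l \<noteq> 0" and \<alpha>\<beta>: "\<alpha> \<noteq> 0 \<or> \<beta> \<noteq> 0"
    and eq1: "g (R x) * \<alpha> + g (R (R x)) * \<beta> = l * \<alpha>"
    and eq2: "g x * \<alpha> + g (R x) * \<beta> = l * \<beta>"
    using constant_diagonal_2x2_nonzero_eigenvalue[OF g_Rx] by blast
  define y where "y = scaleC \<alpha> x + scaleC \<beta> (R x)"
  have "R (S y) + S (R y) = scaleC (g x * \<alpha> + g (R x) * \<beta>) (R x)
      + scaleC (g (R x) * \<alpha> + g (R (R x)) * \<beta>) x"
    unfolding S_def y_def
    by (simp add: bounded_operators_add[OF R] bounded_operators_scaleC[OF R] g_add g_scaleC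
        mult.commute)
  also have "\<dots> = scaleC l y"
    unfolding eq1 eq2 y_def scaleC_add_right scaleC_scaleC by (simp add: add.commute mult.commute)
  finally have "R (S y) + S (R y) = scaleC l y" .
  moreover have "y \<noteq> 0"
  proof
    assume "y = 0"
    show False
    proof (cases "\<beta> = 0")
      case True
      with \<open>y = 0\<close> have "cmod \<alpha> * norm x = 0" using norm_scaleC[of \<alpha> x] unfolding y_def by simp
      with True \<alpha>\<beta> have "x = 0" by simp
      then show False using \<open>R x \<noteq> 0\<close> bounded_operators_zero[OF R] by simp
    next
      case False
      have "scaleC (inverse \<beta>) y = scaleC (\<alpha> / \<beta>) x + R x"
        unfolding y_def scaleC_add_right scaleC_scaleC using False
        by (simp add: field_simps scaleC_one)
      with \<open>y = 0\<close> have "R x = scaleC (- (\<alpha> / \<beta>)) x"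
        by (simp add: scaleC_minus_left eq_neg_iff_add_eq_0 add.commute)
      then show False using not_eigen by blast
    qed
  qed
  ultimately show ?thesis using that S \<open>l \<noteq> 0\<close> by blast
qed

lemma anticommutator_scaleC:
  assumes "R \<in> bounded_operators" "S \<in> bounded_operators"
  shows "R (S (scaleC c z)) + S (R (scaleC c z)) = scaleC c (R (S z) + S (R z))"
  using assms by (simp add: bounded_operators_scaleC scaleC_add_right)

lemma anticommutator_analytic_core_nontrivial:
  fixes R :: "'a::complex_banach \<Rightarrow> 'a"
  assumes R: "R \<in> bounded_operators" and "R \<noteq> (\<lambda>x. 0)"
  shows "\<exists>S\<in>bounded_operators. analytic_core (\<lambda>z. R (S z) + S (R z)) \<noteq> {0}"
proof -
  obtain x where "R x \<noteq> 0" using assms(2) by blast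
  obtain S y l where S: "S \<in> bounded_operators" and "y \<noteq> 0" "l \<noteq> 0"
    and eigen: "R (S y) + S (R y) = scaleC l y"
  proof (cases "\<exists>\<mu>. R x = scaleC \<mu> x")
    case True
    then obtain \<mu> where \<mu>: "R x = scaleC \<mu> x" by blast
    with \<open>R x \<noteq> 0\<close> have "x \<noteq> 0" "\<mu> + \<mu> \<noteq> 0" by auto
    moreover have "R x + R x = scaleC (\<mu> + \<mu>) x" unfolding \<mu> scaleC_add_left ..
    ultimately show ?thesis by (intro that[OF id_in_bounded_operators]) simp_all
  next
    case False
    then have "\<And>\<mu>. R x \<noteq> scaleC \<mu> x" by blast
    with R obtain S y l where "S \<in> bounded_operators" "y \<noteq> 0" "l \<noteq> 0"
      "R (S y) + S (R y) = scaleC l y"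
      by (rule rank_one_anticommutator_eigenvector)
    then show ?thesis by (rule that)
  qed
  then have "y \<in> analytic_core (\<lambda>z. R (S z) + S (R z))"
    using anticommutator_scaleC[OF R S] by (intro eigenvector_in_analytic_core)
  with S \<open>y \<noteq> 0\<close> show ?thesis by blast
qed

lemma bounded_operator_eq_zero_iff_anticommutator_cores:
  fixes R :: "'a::complex_banach \<Rightarrow> 'a"
  assumes R: "R \<in> bounded_operators"
  shows "R = (\<lambda>x. 0) \<longleftrightarrow> (\<forall>S\<in>bounded_operators. analytic_core (\<lambda>z. R (S z) + S (R z)) = {0})"
proof
  assume "R = (\<lambda>x. 0)"
  then show "\<forall>S\<in>bounded_operators. analytic_core (\<lambda>z. R (S z) + S (R z)) = {0}"
    by (simp add: bounded_operators_zero analytic_core_zero_operator)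
next
  assume "\<forall>S\<in>bounded_operators. analytic_core (\<lambda>z. R (S z) + S (R z)) = {0}"
  then show "R = (\<lambda>x. 0)" using anticommutator_analytic_core_nontrivial[OF R] by blast
qed

theorem mainTheorem5:
  fixes \<phi> :: "('a::complex_banach \<Rightarrow> 'a) \<Rightarrow> ('a \<Rightarrow> 'a)"
  assumes "infinite_dimensional TYPE('a)"
    and "\<phi> ` bounded_operators = bounded_operators"
    and "\<And>T S. T \<in> bounded_operators \<Longrightarrow> S \<in> bounded_operators \<Longrightarrow>
           analytic_core (\<lambda>x. \<phi> T (\<phi> S x) + \<phi> S (\<phi> T x))
             = analytic_core (\<lambda>x. T (S x) + S (T x))"
  shows "\<forall>R\<in>bounded_operators. \<phi> R = (\<lambda>x. 0) \<longleftrightarrow> R = (\<lambda>x. 0)"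
proof
  fix R :: "'a \<Rightarrow> 'a"
  assume R: "R \<in> bounded_operators"
  then have "\<phi> R \<in> bounded_operators" using assms(2) by blast
  then have "\<phi> R = (\<lambda>x. 0)
      \<longleftrightarrow> (\<forall>S\<in>\<phi> ` bounded_operators. analytic_core (\<lambda>z. \<phi> R (S z) + S (\<phi> R z)) = {0})"
    unfolding assms(2) by (rule bounded_operator_eq_zero_iff_anticommutator_cores)
  also have "\<dots> \<longleftrightarrow> (\<forall>S\<in>bounded_operators. analytic_core (\<lambda>z. R (S z) + S (R z)) = {0})"
    using assms(3)[OF R] by simp
  also have "\<dots> \<longleftrightarrow> R = (\<lambda>x. 0)"
    using bounded_operator_eq_zero_iff_anticommutator_cores[OF R] by simp
  finally show "\<phi> R = (\<lambda>x. 0) \<longleftrightarrow> R = (\<lambda>x. 0)" .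
qed

end
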